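(* Let $m$ be a real number such that $\frac m2\notin\{0,-1,-2,\dots\}$ and let $d(z,n)=\frac{z^n}{\frac m2(\frac m2+1)\cdots(\frac m2+n-1)}=\frac{z^n\Gamma(\frac m2)}{\Gamma(\frac m2+n)}$ for $z\ge0$, $n\in\mathbb N$ (with $d(z,0)=1$). Then $\mathcal K^\alpha\rightarrow^dK^\alpha$ for each $\alpha\in\{+,-,0\}$. As a consequence, every element of the algebra generated by $\mathcal K^+,\mathcal K^-,\mathcal K^0$ is dual, with duality function $d$, to the element of the algebra generated by $K^+,K^-,K^0$ obtained by replacing each operator $\mathcal K^\alpha$ by $K^\alpha$ and reversing the order of products.
   Context: $\mathbb N=\{0,1,2,\dots\}$. On smooth functions $f:[0,\infty)\to\mathbb R$: $\mathcal K^+f(z)=zf(z)$, $\mathcal K^-f(z)=zf''(z)+\frac m2f'(z)$, $\mathcal K^0f(z)=zf'(z)+\frac m4f(z)$. On functions $f:\mathbb N\to\mathbb R$: $K^+f(n)=(\frac m2+n)f(n+1)$, $K^-f(n)=nf(n-1)$, $K^0f(n)=(\frac m4+n)f(n)$. Left/right actions: $(\mathcal K_ld)(z,n)=(\mathcal Kd(\cdot,n))(z)$, $(K_rd)(z,n)=(Kd(z,\cdot))(n)$; $\mathcal K\rightarrow^dK$ means $\mathcal K_ld=K_rd$. *)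

theory Defs
  imports "HOL-Analysis.Analysis"
begin

datatype gen = KPlus | KMinus | KZero

text \<open>Continuous-variable operators acting on functions of z (the functions we
apply them to are polynomials in z, so the ordinary derivative is used).\<close>
fun calK :: "real \<Rightarrow> gen \<Rightarrow> (real \<Rightarrow> real) \<Rightarrow> real \<Rightarrow> real" where
  "calK m KPlus f z = z * f z"
| "calK m KMinus f z = z * deriv (deriv f) z + m / 2 * deriv f z"
| "calK m KZero f z = z * deriv f z + m / 4 * f z"

fun Kd :: "real \<Rightarrow> gen \<Rightarrow> (nat \<Rightarrow> real) \<Rightarrow> nat \<Rightarrow> real" where
  "Kd m KPlus f n = (m / 2 + real n) * f (n + 1)"
| "Kd m KMinus f n = real n * f (n - 1)"
| "Kd m KZero f n = (m / 4 + real n) * f n"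

definition left_act :: "real \<Rightarrow> gen \<Rightarrow> (real \<Rightarrow> nat \<Rightarrow> real) \<Rightarrow> real \<Rightarrow> nat \<Rightarrow> real" where
  "left_act m a D = (\<lambda>z n. calK m a (\<lambda>y. D y n) z)"

definition right_act :: "real \<Rightarrow> gen \<Rightarrow> (real \<Rightarrow> nat \<Rightarrow> real) \<Rightarrow> real \<Rightarrow> nat \<Rightarrow> real" where
  "right_act m a D = (\<lambda>z n. Kd m a (D z) n)"

text \<open>A word [a1,...,ak] denotes the product K^{a1} ... K^{ak}, acting as
K^{a1}(K^{a2}(...(K^{ak} D))).\<close>
definition left_word :: "real \<Rightarrow> gen list \<Rightarrow> (real \<Rightarrow> nat \<Rightarrow> real) \<Rightarrow> real \<Rightarrow> nat \<Rightarrow> real" where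
  "left_word m w D = foldr (left_act m) w D"

definition right_word :: "real \<Rightarrow> gen list \<Rightarrow> (real \<Rightarrow> nat \<Rightarrow> real) \<Rightarrow> real \<Rightarrow> nat \<Rightarrow> real" where
  "right_word m w D = foldr (right_act m) w D"

text \<open>An element of the generated algebra: a finite real linear combination of words.\<close>
type_synonym alg_elem = "(real \<times> gen list) list"

definition left_elem :: "real \<Rightarrow> alg_elem \<Rightarrow> (real \<Rightarrow> nat \<Rightarrow> real) \<Rightarrow> real \<Rightarrow> nat \<Rightarrow> real" where
  "left_elem m A D = (\<lambda>z n. (\<Sum>(c, w)\<leftarrow>A. c * left_word m w D z n))"

definition right_elem :: "real \<Rightarrow> alg_elem \<Rightarrow> (real \<Rightarrow> nat \<Rightarrow> real) \<Rightarrow> real \<Rightarrow> nat \<Rightarrow> real" where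
  "right_elem m A D = (\<lambda>z n. (\<Sum>(c, w)\<leftarrow>A. c * right_word m w D z n))"

definition rev_elem :: "alg_elem \<Rightarrow> alg_elem" where
  "rev_elem A = map (\<lambda>(c, w). (c, rev w)) A"

definition dfun :: "real \<Rightarrow> real \<Rightarrow> nat \<Rightarrow> real" where
  "dfun m z n = z ^ n / pochhammer (m / 2) n"

end

theory Submission
  imports Defs "HOL-Computational_Algebra.Polynomial"
begin

text \<open>A discrete generator acts on the index n only, by a shift and a scalar factor, and a
  continuous generator is linear in z; on functions polynomial in z the two kinds of action
  therefore commute. So the duality of a word follows from that of its letters, peeled off one at
  a time, which reverses their order. For a single generator it is a direct computation with
  (m/2 + n) d(z, n+1) = z d(z, n), z d'(z, n) = n d(z, n) and
  d'(z, n+1) = (n+1)/(m/2 + n) d(z, n), where ' is the derivative in z.\<close>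

definition polynomial_in_z :: "(real \<Rightarrow> nat \<Rightarrow> real) \<Rightarrow> bool" where
  "polynomial_in_z D \<longleftrightarrow> (\<forall>n. \<exists>p. (\<lambda>z. D z n) = poly p)"

lemma deriv_poly: "deriv (poly p) = poly (pderiv (p :: real poly))"
  by (rule ext, rule DERIV_imp_deriv, rule poly_DERIV)

lemma calK_cmult_poly: "calK m a (\<lambda>z. c * poly p z) z = c * calK m a (poly p) z"
proof -
  have "(\<lambda>z. c * poly p z) = poly (smult c p)"
    by auto
  then show ?thesis
    by (cases a) (simp_all add: deriv_poly pderiv_smult algebra_simps)
qed

lemma right_act_shift_scale: "\<exists>c k. \<forall>D z. right_act m b D z n = c * D z k"
  by (cases b) (auto simp: right_act_def)

lemma polynomial_in_z_right_act:
  assumes "polynomial_in_z D"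
  shows "polynomial_in_z (right_act m b D)"
  unfolding polynomial_in_z_def
proof
  fix n
  obtain c k where ck: "\<And>D z. right_act m b D z n = c * D z k"
    using right_act_shift_scale by blast
  obtain p where "(\<lambda>z. D z k) = poly p"
    using assms unfolding polynomial_in_z_def by blast
  then have "(\<lambda>z. right_act m b D z n) = poly (smult c p)"
    by (simp add: ck fun_eq_iff)
  then show "\<exists>q. (\<lambda>z. right_act m b D z n) = poly q" ..
qed

lemma polynomial_in_z_right_word:
  "polynomial_in_z D \<Longrightarrow> polynomial_in_z (foldr (right_act m) w D)"
  by (induction w) (simp_all add: polynomial_in_z_right_act)

lemma left_act_right_act_commute:
  assumes "polynomial_in_z D"
  shows "left_act m a (right_act m b D) = right_act m b (left_act m a D)"
proof (intro ext)
  fix z n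
  obtain c k where ck: "\<And>D z. right_act m b D z n = c * D z k"
    using right_act_shift_scale by blast
  obtain p where p: "(\<lambda>z. D z k) = poly p"
    using assms unfolding polynomial_in_z_def by blast
  have "left_act m a (right_act m b D) z n = calK m a (\<lambda>y. c * poly p y) z"
    by (simp add: left_act_def ck p[symmetric])
  also have "\<dots> = c * left_act m a D z k"
    by (simp add: calK_cmult_poly left_act_def p)
  also have "\<dots> = right_act m b (left_act m a D) z n"
    by (simp add: ck)
  finally show "left_act m a (right_act m b D) z n = right_act m b (left_act m a D) z n" .
qed

lemma left_act_right_word_commute:
  assumes "polynomial_in_z D"
  shows "left_act m a (foldr (right_act m) w D) = foldr (right_act m) w (left_act m a D)"
  using assms
  by (induction w) (simp_all add: left_act_right_act_commute polynomial_in_z_right_word)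

lemma left_word_eq_right_word_rev:
  assumes "polynomial_in_z D" and "\<And>a. left_act m a D = right_act m a D"
  shows "left_word m w D = right_word m (rev w) D"
proof (induction w)
  case Nil
  show ?case by (simp add: left_word_def right_word_def)
next
  case (Cons a w)
  have "left_word m (a # w) D = left_act m a (foldr (right_act m) (rev w) D)"
    using Cons by (simp add: left_word_def right_word_def)
  also have "\<dots> = foldr (right_act m) (rev w) (right_act m a D)"
    by (simp add: left_act_right_word_commute assms)
  finally show ?case by (simp add: right_word_def)
qed

lemma left_elem_eq_right_elem_rev_elem:
  assumes "polynomial_in_z D" and "\<And>a. left_act m a D = right_act m a D"
  shows "left_elem m A D = right_elem m (rev_elem A) D"
  using left_word_eq_right_word_rev[OF assms]
  by (simp add: left_elem_def right_elem_def rev_elem_def case_prod_unfold o_def)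

lemma polynomial_in_z_dfun: "polynomial_in_z (dfun m)"
  unfolding polynomial_in_z_def dfun_def
proof
  fix n
  have "(\<lambda>z. z ^ n / pochhammer (m / 2) n) = poly (smult (1 / pochhammer (m / 2) n) (monom 1 n))"
    by (simp add: fun_eq_iff poly_monom)
  then show "\<exists>p. (\<lambda>z. z ^ n / pochhammer (m / 2) n) = poly p" ..
qed

lemma half_plus_of_nat_nonzero:
  assumes "\<forall>k::nat. m / 2 \<noteq> - real k"
  shows "m / 2 + real n \<noteq> 0"
  using assms by (metis add.inverse_inverse add_eq_0_iff)

lemma dfun_Suc:
  assumes "\<forall>k::nat. m / 2 \<noteq> - real k"
  shows "(m / 2 + real n) * dfun m z (Suc n) = z * dfun m z n"
  using half_plus_of_nat_nonzero[OF assms] by (simp add: dfun_def pochhammer_rec' add.commute)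

lemma dfun_has_field_derivative:
  "((\<lambda>z. dfun m z n) has_field_derivative real n * z ^ (n - 1) / pochhammer (m / 2) n) (at z)"
  unfolding dfun_def by (intro DERIV_cdivide) (auto intro!: derivative_eq_intros)

lemma deriv_dfun: "deriv (\<lambda>z. dfun m z n) = (\<lambda>z. real n * z ^ (n - 1) / pochhammer (m / 2) n)"
  using dfun_has_field_derivative by (intro ext DERIV_imp_deriv)

lemma dfun_field_differentiable: "(\<lambda>z. dfun m z n) field_differentiable at z"
  using dfun_has_field_derivative field_differentiable_def by blast

lemma z_deriv_dfun: "z * deriv (\<lambda>z. dfun m z n) z = real n * dfun m z n"
  unfolding deriv_dfun by (cases n) (simp_all add: dfun_def)

lemma deriv_dfun_Suc:
  assumes "\<forall>k::nat. m / 2 \<noteq> - real k"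
  shows "deriv (\<lambda>z. dfun m z (Suc n)) = (\<lambda>z. real (Suc n) / (m / 2 + real n) * dfun m z n)"
proof
  fix z
  show "deriv (\<lambda>z. dfun m z (Suc n)) z = real (Suc n) / (m / 2 + real n) * dfun m z n"
    using half_plus_of_nat_nonzero[OF assms]
    unfolding deriv_dfun by (simp add: dfun_def pochhammer_rec' add.commute)
qed

lemma left_act_dfun_eq_right_act_dfun:
  assumes "\<forall>k::nat. m / 2 \<noteq> - real k"
  shows "left_act m a (dfun m) = right_act m a (dfun m)"
proof (intro ext)
  fix z n
  show "left_act m a (dfun m) z n = right_act m a (dfun m) z n"
  proof (cases a)
    case KPlus
    then show ?thesis
      by (simp add: left_act_def right_act_def dfun_Suc[OF assms])
  next
    case KZero
    then show ?thesis
      by (simp add: left_act_def right_act_def z_deriv_dfun algebra_simps)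
  next
    case KMinus
    show ?thesis
    proof (cases n)
      case 0
      then show ?thesis
        using KMinus by (simp add: left_act_def right_act_def deriv_dfun)
    next
      case (Suc k)
      define c where "c = real (Suc k) / (m / 2 + real k)"
      have c: "c * (m / 2 + real k) = real (Suc k)"
        using half_plus_of_nat_nonzero[OF assms] by (simp add: c_def)
      have deriv_d: "deriv (\<lambda>z. dfun m z n) = (\<lambda>z. c * dfun m z k)"
        using Suc by (simp add: deriv_dfun_Suc[OF assms] c_def)
      have "left_act m a (dfun m) z n
          = z * deriv (\<lambda>z. c * dfun m z k) z + m / 2 * (c * dfun m z k)"
        using KMinus by (simp add: left_act_def deriv_d)
      also have "\<dots> = c * (z * deriv (\<lambda>z. dfun m z k) z + m / 2 * dfun m z k)"
        by (simp add: deriv_cmult dfun_field_differentiable algebra_simps)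
      also have "\<dots> = c * (m / 2 + real k) * dfun m z k"
        by (simp add: z_deriv_dfun algebra_simps)
      also have "\<dots> = right_act m a (dfun m) z n"
        using KMinus Suc c by (simp add: right_act_def)
      finally show ?thesis .
    qed
  qed
qed

theorem proposition5p2:
  fixes m :: real
  assumes "\<forall>k::nat. m / 2 \<noteq> - real k"
  shows "(\<forall>a z n. z \<ge> 0 \<longrightarrow> left_act m a (dfun m) z n = right_act m a (dfun m) z n)
       \<and> (\<forall>A z n. z \<ge> 0 \<longrightarrow> left_elem m A (dfun m) z n = right_elem m (rev_elem A) (dfun m) z n)"
  using left_act_dfun_eq_right_act_dfun[OF assms]
    left_elem_eq_right_elem_rev_elem[OF polynomial_in_z_dfun]
  by simp

end
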